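(* Let $t\ge0$ with $2t+1\le n$, and let $f\in\mathbf{SB}_n$ be of the form $f=\sigma_{2t+1}+\sum_{i=0}^{2t}\lambda_f(i)\sigma_i$ with $\lambda_f(i)\in\mathbb{F}_2$. Let $g=\sigma_1+\lambda_f(2t)+1$. Then $\deg(gf)\le 2t-1$ (for $t=0$ this means $gf=0$). Moreover: (a) if $\lambda_f(2t)=0$, then $(\sigma_1+1)f=0$ if $\lambda_f(2s)=0$ for all $0\le s\le t-1$, and otherwise $(\sigma_1+1)f$ has degree exactly $2s+1$, where $s$ is the largest index in $\{0,\dots,t-1\}$ with $\lambda_f(2s)=1$; (b) if $\lambda_f(2t)=1$, then $\sigma_1 f=0$ if $\lambda_f(2s)=\lambda_f(2s+1)$ for all $0\le s\le t-1$, and otherwise $\sigma_1f$ has degree exactly $2s+1$, where $s$ is the largest index in $\{0,\dots,t-1\}$ with $\lambda_f(2s)+\lambda_f(2s+1)=1$.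
   Context: $\mathbf{SB}_n$ is the set of symmetric Boolean functions on $n$ variables, $\sigma_i$ the $i$-th elementary symmetric function of $x_1,\dots,x_n$ over $\mathbb{F}_2$ ($\sigma_0=1$). Every $f\in\mathbf{SB}_n$ can be uniquely written $f=\sum_{i=0}^n\lambda_f(i)\sigma_i$ with $\lambda_f(i)\in\mathbb{F}_2$. $\deg$ is the algebraic degree (degree of the algebraic normal form). *)

theory Defs
  imports Main "HOL-Library.Z2"
begin

text \<open>Boolean functions on n variables x_0,...,x_{n-1} over F_2 (type bit) are modelled as
functions h :: nat set \<Rightarrow> bit, where an input vector x is identified with its support
X = {i. x_i = 1} \<subseteq> {0..<n}. Only the values on subsets of {0..<n} are relevant.\<close>

definition sigma :: "nat \<Rightarrow> nat set \<Rightarrow> bit" where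
  "sigma i X = of_nat (card {S. S \<subseteq> X \<and> card S = i})"

text \<open>ANF coefficient of the monomial x_S (Moebius transform).\<close>
definition anf :: "(nat set \<Rightarrow> bit) \<Rightarrow> nat set \<Rightarrow> bit" where
  "anf h S = (\<Sum>T\<in>Pow S. h T)"

definition anf_deg :: "nat \<Rightarrow> (nat set \<Rightarrow> bit) \<Rightarrow> int" where
  "anf_deg n h = (if \<forall>S\<subseteq>{0..<n}. anf h S = 0 then -1
     else int (Max {card S | S. S \<subseteq> {0..<n} \<and> anf h S \<noteq> 0}))"

end

theory Submission
  imports Defs
begin

text \<open>
  Write \<open>P = \<Sum>k<2t. \<lambda>(k) \<sigma>\<^sub>k\<close>, so that
  \<open>f = \<sigma>\<^sub>2\<^sub>t\<^sub>+\<^sub>1 + \<lambda>(2t) \<sigma>\<^sub>2\<^sub>t + P\<close>.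
  Since \<open>\<sigma>\<^sub>k(X) = binom(|X|, k) mod 2\<close>, Lucas-type parity facts give
  \<open>\<sigma>\<^sub>1 \<sigma>\<^sub>2\<^sub>s = \<sigma>\<^sub>2\<^sub>s\<^sub>+\<^sub>1\<close> and
  \<open>\<sigma>\<^sub>1 \<sigma>\<^sub>2\<^sub>s\<^sub>+\<^sub>1 = \<sigma>\<^sub>2\<^sub>s\<^sub>+\<^sub>1\<close>.
  Hence multiplying by \<open>g\<close> kills the top terms and turns \<open>P\<close> into another
  symmetric function \<open>\<Sum>k<2t. c(k) \<sigma>\<^sub>k\<close> with explicit coefficients:
  \<open>c(k) = \<lambda>(2\<lfloor>k/2\<rfloor>)\<close> when \<open>\<lambda>(2t) = 0\<close>, and
  \<open>c(2s+1) = \<lambda>(2s) + \<lambda>(2s+1)\<close>, \<open>c(2s) = 0\<close> when \<open>\<lambda>(2t) = 1\<close>.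
  The second ingredient is that the ANF of \<open>\<sigma>\<^sub>k\<close> is the indicator of the monomials of
  degree \<open>k\<close>; so the degree of \<open>\<Sum>k<m. c(k) \<sigma>\<^sub>k\<close> (for \<open>m \<le> n+1\<close>) is the
  largest \<open>k\<close> with \<open>c(k) \<noteq> 0\<close>.  The theorem then reduces to locating the
  largest nonzero coefficient, which is always odd, namely \<open>2s+1\<close>.
\<close>

text \<open>Keep \<open>+\<close> and \<open>*\<close> on \<open>bit\<close> as field operations
  instead of bitwise ones.\<close>
declare add_bit_eq_xor [simp del] mult_bit_eq_and [simp del]

lemma bit_add_self [simp]: "(a :: bit) + a = 0"
  by (cases a) simp_all

lemma bit_add_eq_1_iff: "(a :: bit) + b = 1 \<longleftrightarrow> a \<noteq> b"
  by (cases a; cases b) simp_all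

lemma of_nat_bit: "(of_nat m :: bit) = (if even m then 0 else 1)"
  by (induction m) simp_all

lemma sigma_finite: "finite X \<Longrightarrow> sigma k X = of_nat (card X choose k)"
  by (simp add: sigma_def n_subsets)

lemma sigma_0: "finite T \<Longrightarrow> sigma 0 T = 1"
  by (simp add: sigma_finite)

lemma sigma_insert:
  assumes "finite T" "x \<notin> T"
  shows "sigma (Suc k) (insert x T) = sigma (Suc k) T + sigma k T"
  using assms by (simp add: sigma_finite)

text \<open>Parity of binomial coefficients: for even \<open>k\<close>, \<open>binom(m, k+1)\<close> is odd iff \<open>m\<close> and
  \<open>binom(m, k)\<close> are; it follows from \<open>binom(m, k+1)(k+1) = binom(m, k)(m-k)\<close>.\<close>
lemma odd_binomial_Suc_even:
  assumes "even k"
  shows "odd (m choose Suc k) \<longleftrightarrow> odd m \<and> odd (m choose k)"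
proof (cases "k \<le> m")
  case True
  have "(m choose Suc k) * Suc k = (m choose k) * (m - k)"
    using binomial_absorb_comp[of m k] Suc_times_binomial_eq[of "m - 1" k] True
    by (cases m) (simp_all add: mult.commute)
  then have "odd (m choose Suc k) \<longleftrightarrow> odd (m choose k) \<and> odd (m - k)"
    using assms by (metis even_Suc even_mult_iff)
  then show ?thesis using assms True by auto
next
  case False
  then show ?thesis by (simp add: binomial_eq_0)
qed

lemma sigma1_times_sigma_even:
  "finite X \<Longrightarrow> sigma 1 X * sigma (2 * s) X = sigma (2 * s + 1) X"
  using odd_binomial_Suc_even[of "2 * s" "card X"] by (simp add: sigma_finite of_nat_bit)

lemma sigma1_times_sigma_odd:
  "finite X \<Longrightarrow> sigma 1 X * sigma (2 * s + 1) X = sigma (2 * s + 1) X"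
  using odd_binomial_Suc_even[of "2 * s" "card X"] by (auto simp add: sigma_finite of_nat_bit)

subsection \<open>Algebraic normal form and degree of symmetric functions\<close>

lemma sum_Pow_insert:
  assumes "finite S" "x \<notin> S"
  shows "(\<Sum>T\<in>Pow (insert x S). h T) = (\<Sum>T\<in>Pow S. h T) + (\<Sum>T\<in>Pow S. h (insert x T))"
proof -
  have "inj_on (insert x) (Pow S)"
    using assms(2) unfolding inj_on_def by (metis Diff_insert_absorb PowD subsetD)
  moreover have "Pow S \<inter> insert x ` Pow S = {}"
    using assms(2) by blast
  ultimately show ?thesis
    unfolding Pow_insert using assms(1) by (simp add: sum.union_disjoint sum.reindex)
qed

lemma anf_sigma: "finite S \<Longrightarrow> anf (sigma k) S = (if card S = k then 1 else 0)"
proof (induction S arbitrary: k rule: finite_induct)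
  case empty
  then show ?case by (cases k) (simp_all add: anf_def sigma_finite)
next
  case (insert x S)
  have fin: "finite T" "x \<notin> T" if "T \<in> Pow S" for T
    using that insert.hyps finite_subset by blast+
  have "anf (sigma k) (insert x S) = anf (sigma k) S + (\<Sum>T\<in>Pow S. sigma k (insert x T))"
    unfolding anf_def using sum_Pow_insert[OF insert.hyps] .
  also have "(\<Sum>T\<in>Pow S. sigma k (insert x T))
      = anf (sigma k) S + (if k = 0 then 0 else anf (sigma (k - 1)) S)"
  proof (cases k)
    case 0
    have "sigma 0 (insert x T) = sigma 0 T" if "T \<in> Pow S" for T
      using fin[OF that] by (simp add: sigma_0)
    then show ?thesis unfolding anf_def 0 by simp
  next
    case (Suc j)
    have "sigma k (insert x T) = sigma k T + sigma j T" if "T \<in> Pow S" for T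
      using fin[OF that] Suc by (simp add: sigma_insert)
    then show ?thesis unfolding anf_def using Suc by (simp add: sum.distrib)
  qed
  finally have "anf (sigma k) (insert x S) = (if k = 0 then 0 else anf (sigma (k - 1)) S)"
    by (simp add: add.assoc[symmetric])
  then show ?case using insert by auto
qed

lemma anf_sigma_sum:
  assumes "finite S"
  shows "anf (\<lambda>X. \<Sum>k<m. c k * sigma k X) S = (if card S < m then c (card S) else 0)"
proof -
  have "anf (\<lambda>X. \<Sum>k<m. c k * sigma k X) S = (\<Sum>k<m. c k * anf (sigma k) S)"
    unfolding anf_def by (simp add: sum.swap[of _ "Pow S"] sum_distrib_left)
  also have "\<dots> = (\<Sum>k<m. if k = card S then c k else 0)"
    using assms by (intro sum.cong) (simp_all add: anf_sigma)
  finally show ?thesis by simp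
qed

lemma anf_deg_sigma_sum:
  assumes "m \<le> Suc n" and h: "\<And>X. X \<subseteq> {0..<n} \<Longrightarrow> h X = (\<Sum>k<m. c k * sigma k X)"
  shows "anf_deg n h = (if \<forall>k<m. c k = 0 then -1 else int (GREATEST k. k < m \<and> c k \<noteq> 0))"
proof -
  have anf_h: "anf h S = (if card S < m then c (card S) else 0)" if "S \<subseteq> {0..<n}" for S
  proof -
    have "anf h S = anf (\<lambda>X. \<Sum>k<m. c k * sigma k X) S"
      unfolding anf_def using that by (intro sum.cong refl h) auto
    also have "\<dots> = (if card S < m then c (card S) else 0)"
      using that by (intro anf_sigma_sum) (rule finite_subset, auto)
    finally show ?thesis .
  qed
  have degrees: "{card S | S. S \<subseteq> {0..<n} \<and> anf h S \<noteq> 0} = {k. k < m \<and> c k \<noteq> 0}"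
  proof (intro equalityI subsetI)
    fix k assume "k \<in> {k. k < m \<and> c k \<noteq> 0}"
    then have "{0..<k} \<subseteq> {0..<n}" "card {0..<k} = k" "anf h {0..<k} \<noteq> 0"
      using assms(1) anf_h[of "{0..<k}"] by auto
    then show "k \<in> {card S | S. S \<subseteq> {0..<n} \<and> anf h S \<noteq> 0}"
      by (metis (mono_tags, lifting) mem_Collect_eq)
  qed (auto simp: anf_h split: if_splits)
  have "(\<forall>S\<subseteq>{0..<n}. anf h S = 0) \<longleftrightarrow> (\<forall>k<m. c k = 0)"
    using degrees by blast
  moreover have "Max {k. k < m \<and> c k \<noteq> 0} = (GREATEST k. k < m \<and> c k \<noteq> 0)"
    if "\<exists>k<m. c k \<noteq> 0"
    using that by (intro Greatest_Max[symmetric]) auto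
  ultimately show ?thesis unfolding anf_deg_def degrees by auto
qed

lemma anf_deg_sigma_sum_le:
  assumes "m \<le> Suc n" and "\<And>X. X \<subseteq> {0..<n} \<Longrightarrow> h X = (\<Sum>k<m. c k * sigma k X)"
  shows "anf_deg n h \<le> int m - 1"
proof -
  have "(GREATEST k. k < m \<and> c k \<noteq> 0) < m" if "k < m" "c k \<noteq> 0" for k
    using GreatestI_nat[of "\<lambda>k. k < m \<and> c k \<noteq> 0" k m] that by auto
  then show ?thesis using anf_deg_sigma_sum[OF assms] by force
qed

subsection \<open>Multiplying by \<open>\<sigma>\<^sub>1\<close> and \<open>\<sigma>\<^sub>1 + 1\<close>\<close>

lemma sum_lessThan_double: "(\<Sum>k<2 * (t :: nat). F k) = (\<Sum>s<t. F (2 * s) + F (2 * s + 1))"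
  by (induction t) (simp_all add: algebra_simps)

lemma sigma1_times_sum:
  assumes "finite X"
  shows "sigma 1 X * (\<Sum>k<2 * t. c k * sigma k X)
    = (\<Sum>k<2 * t. (if odd k then c (k - 1) + c k else 0) * sigma k X)"
proof -
  have "sigma 1 X * (c (2 * s) * sigma (2 * s) X + c (2 * s + 1) * sigma (2 * s + 1) X)
      = c (2 * s) * (sigma 1 X * sigma (2 * s) X) + c (2 * s + 1) * (sigma 1 X * sigma (2 * s + 1) X)"
    for s by (simp only: distrib_left mult.left_commute)
  then have "sigma 1 X * (c (2 * s) * sigma (2 * s) X + c (2 * s + 1) * sigma (2 * s + 1) X)
      = (c (2 * s) + c (2 * s + 1)) * sigma (2 * s + 1) X" for s
    by (simp only: sigma1_times_sigma_even[OF assms] sigma1_times_sigma_odd[OF assms] distrib_right)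
  then show ?thesis by (simp add: sum_lessThan_double sum_distrib_left)
qed

lemma sigma1_plus1_times_sum:
  assumes "finite X"
  shows "(sigma 1 X + 1) * (\<Sum>k<2 * t. c k * sigma k X)
    = (\<Sum>k<2 * t. c (2 * (k div 2)) * sigma k X)"
proof -
  have "(if odd k then c (k - 1) + c k else 0) + c k = c (2 * (k div 2))" for k
    by (cases "odd k") (auto simp: add.assoc elim!: oddE)
  then have "(\<Sum>k<2 * t. (if odd k then c (k - 1) + c k else 0) * sigma k X + c k * sigma k X)
      = (\<Sum>k<2 * t. c (2 * (k div 2)) * sigma k X)"
    by (simp only: distrib_right[symmetric])
  then show ?thesis
    by (simp only: distrib_right mult_1_left sigma1_times_sum[OF assms] sum.distrib)
qed

lemma sigma1_times_f:
  assumes "finite X" "lam (2 * t) = 1"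
  shows "sigma 1 X * (sigma (2 * t + 1) X + (\<Sum>i\<le>2 * t. lam i * sigma i X))
    = (\<Sum>k<2 * t. (if odd k then lam (k - 1) + lam k else 0) * sigma k X)"
proof -
  have "sigma 1 X * (sigma (2 * t + 1) X + (\<Sum>i\<le>2 * t. lam i * sigma i X))
      = (sigma 1 X * sigma (2 * t + 1) X + sigma 1 X * sigma (2 * t) X)
        + sigma 1 X * (\<Sum>k<2 * t. lam k * sigma k X)"
    unfolding lessThan_Suc_atMost[symmetric] sum.lessThan_Suc using assms(2) by (simp add: ring_distribs add_ac)
  also have "\<dots> = sigma 1 X * (\<Sum>k<2 * t. lam k * sigma k X)"
    by (simp only: sigma1_times_sigma_even[OF assms(1)] sigma1_times_sigma_odd[OF assms(1)]
        bit_add_self add_0_left)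
  finally show ?thesis by (simp only: sigma1_times_sum[OF assms(1)])
qed

lemma sigma1_plus1_times_f:
  assumes "finite X" "lam (2 * t) = 0"
  shows "(sigma 1 X + 1) * (sigma (2 * t + 1) X + (\<Sum>i\<le>2 * t. lam i * sigma i X))
    = (\<Sum>k<2 * t. lam (2 * (k div 2)) * sigma k X)"
proof -
  have "(sigma 1 X + 1) * (sigma (2 * t + 1) X + (\<Sum>i\<le>2 * t. lam i * sigma i X))
      = (sigma 1 X * sigma (2 * t + 1) X + sigma (2 * t + 1) X)
        + (sigma 1 X + 1) * (\<Sum>k<2 * t. lam k * sigma k X)"
    unfolding lessThan_Suc_atMost[symmetric] sum.lessThan_Suc using assms(2) by (simp add: ring_distribs add_ac)
  also have "\<dots> = (sigma 1 X + 1) * (\<Sum>k<2 * t. lam k * sigma k X)"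
    by (simp only: sigma1_times_sigma_odd[OF assms(1)] bit_add_self add_0_left)
  finally show ?thesis by (simp only: sigma1_plus1_times_sum[OF assms(1)])
qed

subsection \<open>Locating the leading coefficient\<close>

lemma Greatest_odd_index:
  fixes P Q :: "nat \<Rightarrow> bool"
  assumes "\<And>k. Q k \<Longrightarrow> P (k div 2)" "\<And>s. P s \<Longrightarrow> Q (2 * s + 1)" "s\<^sub>0 < t" "P s\<^sub>0"
  shows "(GREATEST k. k < 2 * t \<and> Q k) = 2 * (GREATEST s. s < t \<and> P s) + 1"
proof -
  define G where "G = (GREATEST s. s < t \<and> P s)"
  have G: "G < t" "P G"
    using GreatestI_nat[of "\<lambda>s. s < t \<and> P s" s\<^sub>0 t] assms(3,4) unfolding G_def by auto
  have maximal: "s \<le> G" if "s < t" "P s" for s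
    using Greatest_le_nat[of "\<lambda>s. s < t \<and> P s" s t] that unfolding G_def by auto
  show ?thesis unfolding G_def[symmetric]
  proof (rule Greatest_equality)
    show "2 * G + 1 < 2 * t \<and> Q (2 * G + 1)" using G assms(2) by auto
    fix k assume "k < 2 * t \<and> Q k"
    then have "k div 2 \<le> G" using maximal assms(1) by auto
    then show "k \<le> 2 * G + 1" by linarith
  qed
qed

lemma degree_even_coefficients:
  assumes "2 * t \<le> Suc n"
    and h: "\<And>X. X \<subseteq> {0..<n} \<Longrightarrow> h X = (\<Sum>k<2 * t. lam (2 * (k div 2)) * sigma k X)"
  shows "((\<forall>s<t. lam (2 * s) = 0) \<longrightarrow> (\<forall>X\<subseteq>{0..<n}. h X = 0))
    \<and> (\<not> (\<forall>s<t. lam (2 * s) = 0) \<longrightarrow>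
         anf_deg n h = 2 * int (GREATEST s. s < t \<and> lam (2 * s) = 1) + 1)"
proof (intro conjI impI allI)
  fix X assume "\<forall>s<t. lam (2 * s) = 0" "X \<subseteq> {0..<n}"
  then show "h X = 0" using h by (simp add: less_mult_imp_div_less)
next
  assume "\<not> (\<forall>s<t. lam (2 * s) = 0)"
  then obtain s\<^sub>0 where s\<^sub>0: "s\<^sub>0 < t" "lam (2 * s\<^sub>0) = 1" by auto
  have "(GREATEST k. k < 2 * t \<and> lam (2 * (k div 2)) \<noteq> 0) = 2 * (GREATEST s. s < t \<and> lam (2 * s) = 1) + 1"
    using s\<^sub>0 by (intro Greatest_odd_index) auto
  moreover have "\<exists>k<2 * t. lam (2 * (k div 2)) \<noteq> 0"
    using s\<^sub>0 by (intro exI[of _ "2 * s\<^sub>0"]) auto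
  ultimately show "anf_deg n h = 2 * int (GREATEST s. s < t \<and> lam (2 * s) = 1) + 1"
    using assms(1) by (subst anf_deg_sigma_sum[OF _ h]) auto
qed

lemma degree_paired_coefficients:
  assumes "2 * t \<le> Suc n"
    and h: "\<And>X. X \<subseteq> {0..<n} \<Longrightarrow>
      h X = (\<Sum>k<2 * t. (if odd k then lam (k - 1) + lam k else 0) * sigma k X)"
  shows "((\<forall>s<t. lam (2 * s) = lam (2 * s + 1)) \<longrightarrow> (\<forall>X\<subseteq>{0..<n}. h X = 0))
    \<and> (\<not> (\<forall>s<t. lam (2 * s) = lam (2 * s + 1)) \<longrightarrow>
         anf_deg n h = 2 * int (GREATEST s. s < t \<and> lam (2 * s) + lam (2 * s + 1) = 1) + 1)"
proof (intro conjI impI allI)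
  fix X assume equal: "\<forall>s<t. lam (2 * s) = lam (2 * s + 1)" and "X \<subseteq> {0..<n}"
  have "(if odd k then lam (k - 1) + lam k else 0) = 0" if "k < 2 * t" for k
  proof (cases "odd k")
    case True
    then obtain s where k: "k = 2 * s + 1" by (elim oddE)
    moreover have "s < t" using that k by simp
    then have "lam (2 * s) = lam (2 * s + 1)" using equal by blast
    ultimately show ?thesis by simp
  qed simp
  then show "h X = 0" using h[OF \<open>X \<subseteq> {0..<n}\<close>] by simp
next
  assume "\<not> (\<forall>s<t. lam (2 * s) = lam (2 * s + 1))"
  then obtain s\<^sub>0 where s\<^sub>0: "s\<^sub>0 < t" "lam (2 * s\<^sub>0) + lam (2 * s\<^sub>0 + 1) = 1"
    by (auto simp: bit_add_eq_1_iff)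
  have "(GREATEST k. k < 2 * t \<and> (if odd k then lam (k - 1) + lam k else 0) \<noteq> 0)
      = 2 * (GREATEST s. s < t \<and> lam (2 * s) + lam (2 * s + 1) = 1) + 1"
    using s\<^sub>0 by (intro Greatest_odd_index) (auto elim!: oddE split: if_splits)
  moreover have "\<exists>k<2 * t. (if odd k then lam (k - 1) + lam k else 0) \<noteq> 0"
    using s\<^sub>0 by (intro exI[of _ "2 * s\<^sub>0 + 1"]) auto
  ultimately show "anf_deg n h = 2 * int (GREATEST s. s < t \<and> lam (2 * s) + lam (2 * s + 1) = 1) + 1"
    using assms(1) by (subst anf_deg_sigma_sum[OF _ h]) auto
qed

theorem theorem3:
  fixes n t :: nat and lam :: "nat \<Rightarrow> bit" and f g :: "nat set \<Rightarrow> bit"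
  assumes "2 * t + 1 \<le> n"
    and f_def: "f = (\<lambda>X. sigma (2 * t + 1) X + (\<Sum>i\<le>2 * t. lam i * sigma i X))"
    and g_def: "g = (\<lambda>X. sigma 1 X + lam (2 * t) + 1)"
  shows "anf_deg n (\<lambda>X. g X * f X) \<le> 2 * int t - 1
    \<and> (lam (2 * t) = 0 \<longrightarrow>
         ((\<forall>s<t. lam (2 * s) = 0) \<longrightarrow> (\<forall>X\<subseteq>{0..<n}. (sigma 1 X + 1) * f X = 0))
       \<and> (\<not> (\<forall>s<t. lam (2 * s) = 0) \<longrightarrow>
            anf_deg n (\<lambda>X. (sigma 1 X + 1) * f X)
              = 2 * int (GREATEST s. s < t \<and> lam (2 * s) = 1) + 1))
    \<and> (lam (2 * t) = 1 \<longrightarrow>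
         ((\<forall>s<t. lam (2 * s) = lam (2 * s + 1)) \<longrightarrow> (\<forall>X\<subseteq>{0..<n}. sigma 1 X * f X = 0))
       \<and> (\<not> (\<forall>s<t. lam (2 * s) = lam (2 * s + 1)) \<longrightarrow>
            anf_deg n (\<lambda>X. sigma 1 X * f X)
              = 2 * int (GREATEST s. s < t \<and> lam (2 * s) + lam (2 * s + 1) = 1) + 1))"
proof -
  have finite: "finite X" if "X \<subseteq> {0..<n}" for X
    using that finite_subset by blast
  have top_even: "(sigma 1 X + 1) * f X = (\<Sum>k<2 * t. lam (2 * (k div 2)) * sigma k X)"
    if "lam (2 * t) = 0" "X \<subseteq> {0..<n}" for X
    using sigma1_plus1_times_f[of X lam t, OF finite[OF that(2)] that(1)] f_def by simp
  have top_odd: "sigma 1 X * f X = (\<Sum>k<2 * t. (if odd k then lam (k - 1) + lam k else 0) * sigma k X)"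
    if "lam (2 * t) = 1" "X \<subseteq> {0..<n}" for X
    using sigma1_times_f[of X lam t, OF finite[OF that(2)] that(1)] f_def by simp
  have size: "2 * t \<le> Suc n" using assms(1) by simp
  have "anf_deg n (\<lambda>X. g X * f X) \<le> int (2 * t) - 1"
  proof (cases "lam (2 * t) = 0")
    case True
    then show ?thesis using size g_def top_even by (intro anf_deg_sigma_sum_le) auto
  next
    case False
    then show ?thesis using size g_def top_odd by (intro anf_deg_sigma_sum_le) auto
  qed
  moreover note degree_even_coefficients[OF size top_even]
  moreover note degree_paired_coefficients[OF size top_odd]
  ultimately show ?thesis by simp
qed

end
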